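(* Let $P$ be a generic regular pentagon in $\mathbb{R}^3$ and $u_1,\ldots,u_5$ a support system of $P$. Then the derived pentagon $P'=B_1\ldots B_5$ is a plane pentagon (all five vertices are coplanar) with oriented area $0$.
   Context: For a closed polygon $P=A_1\ldots A_n$ in $\mathbb{R}^3$ put $v_1=\overline{A_1A_2},\ldots,v_n=\overline{A_nA_1}$, indices cyclic mod $n$. $P$ is generic if any two consecutive $v_i,v_{i+1}$ are not collinear and any three consecutive $v_i,v_{i+1},v_{i+2}$ are not coplanar. A support system of $P$ is a tuple $u_1,\ldots,u_n$ with $[u_i,u_{i+1}]=v_{i+1}$ for all $i$ (cyclically; $[\cdot,\cdot]$ is the cross product). A generic polygon is regular if it has a support system. Given a support system, fix an origin $O$ and let $B_i$ be the point with $\overline{OB_i}=u_i$; the polygon $P'=B_1\ldots B_n$ is the derived polygon of $P$. A closed polygon $B_1\ldots B_n$ has oriented area $0$ if $\sum_{i=1}^n[\overline{OB_i},\overline{OB_{i+1}}]=0$ (independent of $O$); for a plane polygon this means its signed area in its plane is zero. *)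

theory Defs
  imports "HOL-Analysis.Analysis"
begin

definition edge :: "nat \<Rightarrow> (nat \<Rightarrow> real^3) \<Rightarrow> nat \<Rightarrow> real^3" where
  "edge n A i = A (Suc i mod n) - A (i mod n)"

definition generic_polygon :: "nat \<Rightarrow> (nat \<Rightarrow> real^3) \<Rightarrow> bool" where
  "generic_polygon n A \<longleftrightarrow>
     (\<forall>i<n. \<not> collinear {0, edge n A i, edge n A (Suc i)}) \<and>
     (\<forall>i<n. \<not> coplanar {0, edge n A i, edge n A (Suc i), edge n A (Suc (Suc i))})"

definition support_system :: "nat \<Rightarrow> (nat \<Rightarrow> real^3) \<Rightarrow> (nat \<Rightarrow> real^3) \<Rightarrow> bool" where
  "support_system n A u \<longleftrightarrow>
     (\<forall>i<n. cross3 (u i) (u (Suc i mod n)) = edge n A (Suc i))"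

definition regular_polygon :: "nat \<Rightarrow> (nat \<Rightarrow> real^3) \<Rightarrow> bool" where
  "regular_polygon n A \<longleftrightarrow> generic_polygon n A \<and> (\<exists>u. support_system n A u)"

definition oriented_area_zero :: "nat \<Rightarrow> (nat \<Rightarrow> real^3) \<Rightarrow> bool" where
  "oriented_area_zero n B \<longleftrightarrow> (\<Sum>i<n. cross3 (B i) (B (Suc i mod n))) = 0"

end

theory Submission
  imports Defs
begin

text \<open>Summing the defining relations u i \<times> u (i+1) = v (i+1) over a closed polygon,
  the edge vectors telescope to 0, so the oriented area of the derived polygon vanishes.
  For five points, translating u 0 to the origin leaves
  a1 \<times> a2 + a2 \<times> a3 + a3 \<times> a4 = 0 with a i = u i - u 0; dotting this with each a i
  kills every triple product of a1, ..., a4, so these vectors span at most a plane.\<close>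

unbundle cross3_syntax

lemma sum_lessThan_rotate:
  fixes f :: "nat \<Rightarrow> 'a::comm_monoid_add"
  shows "(\<Sum>i<n. f (Suc i mod n)) = (\<Sum>i<n. f i)"
proof (cases n)
  case (Suc m)
  have "(\<Sum>i<Suc m. f (Suc i mod Suc m)) = (\<Sum>i<m. f (Suc i)) + f 0"
    by (simp add: sum.lessThan_Suc)
  also have "\<dots> = (\<Sum>i<Suc m. f i)"
    by (simp only: sum.lessThan_Suc_shift add.commute)
  finally show ?thesis using Suc by simp
qed simp

lemma edge_mod: "edge n A (i mod n) = edge n A i"
  by (simp add: edge_def mod_Suc_eq)

lemma sum_edge_eq_0: "(\<Sum>i<n. edge n A i) = 0"
proof -
  have "(\<Sum>i<n. edge n A i) = (\<Sum>i<n. A (Suc i mod n)) - (\<Sum>i<n. A i)"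
    by (simp add: edge_def sum_subtractf)
  then show ?thesis
    by (simp add: sum_lessThan_rotate[where f = A])
qed

lemma oriented_area_zero_if_support_system:
  assumes "support_system n A u"
  shows "oriented_area_zero n u"
proof -
  have "(\<Sum>i<n. u i \<times> u (Suc i mod n)) = (\<Sum>i<n. edge n A (Suc i mod n))"
    using assms by (simp add: support_system_def edge_mod)
  also have "\<dots> = 0"
    by (simp add: sum_lessThan_rotate[where f = "edge n A"] sum_edge_eq_0)
  finally show ?thesis
    unfolding oriented_area_zero_def .
qed

lemma sum_cross_translate:
  fixes u :: "nat \<Rightarrow> real^3"
  shows "(\<Sum>i<n. (u i - c) \<times> (u (Suc i mod n) - c)) = (\<Sum>i<n. u i \<times> u (Suc i mod n))"
proof -
  have "(u i - c) \<times> (u j - c) = u i \<times> u j + c \<times> u i - c \<times> u j" for i j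
    by (simp add: Cross3.left_diff_distrib Cross3.right_diff_distrib cross_skew[of "u i" c])
  then show ?thesis
    by (simp add: sum.distrib sum_subtractf sum_lessThan_rotate[where f = "\<lambda>i. c \<times> u i"])
qed

text \<open>Both rules are permutative, so the simplifier uses them as ordered rewrites that
  bring any vanishing triple product into a normal form.\<close>

lemma triple_rotate: "x \<bullet> (y \<times> z) = y \<bullet> (z \<times> x)"
  by (simp add: cross3_simps)

lemma triple_eq_0_swap: "x \<bullet> (y \<times> z) = 0 \<longleftrightarrow> x \<bullet> (z \<times> y) = 0"
  by (metis cross_skew inner_minus_right neg_equal_0_iff_equal)

lemma cross_cramer:
  "((y \<times> z) \<bullet> (y \<times> z)) *\<^sub>R x =
     ((x \<times> z) \<bullet> (y \<times> z)) *\<^sub>R y + ((y \<times> x) \<bullet> (y \<times> z)) *\<^sub>R z + (x \<bullet> (y \<times> z)) *\<^sub>R (y \<times> z)"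
  by (simp add: cross3_simps forall_3 power2_eq_square)

lemma in_span_if_orthogonal_cross:
  assumes "x \<times> y \<noteq> 0" "z \<bullet> (x \<times> y) = 0"
  shows "z \<in> span {x, y}"
proof -
  let ?n = "x \<times> y"
  have "(?n \<bullet> ?n) *\<^sub>R z = ((z \<times> y) \<bullet> ?n) *\<^sub>R x + ((x \<times> z) \<bullet> ?n) *\<^sub>R y"
    using cross_cramer[of x y z] assms(2) by simp
  then have "(?n \<bullet> ?n) *\<^sub>R z \<in> span {x, y}"
    by (metis span_add span_mul span_base insertI1 insertI2 singletonI)
  then have "inverse (?n \<bullet> ?n) *\<^sub>R ((?n \<bullet> ?n) *\<^sub>R z) \<in> span {x, y}"
    by (rule span_mul)
  then show ?thesis
    using assms(1) by simp
qed

lemma coplanar_insert_0_if_subset_span: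
  fixes p q :: "'a::euclidean_space"
  assumes "S \<subseteq> span {p, q}"
  shows "coplanar (insert 0 S)"
proof -
  have "affine hull {0, p, q} = span {p, q}"
    by (simp add: affine_hull_span_0 hull_inc)
  then show ?thesis
    unfolding coplanar_def using assms span_zero by blast
qed

lemma coplanar_insert_0_if_triple_products_eq_0:
  fixes S :: "(real^3) set"
  assumes triple: "\<And>x y z. x \<in> S \<Longrightarrow> y \<in> S \<Longrightarrow> z \<in> S \<Longrightarrow> x \<bullet> (y \<times> z) = 0"
  shows "coplanar (insert 0 S)"
proof (cases "\<exists>x\<in>S. \<exists>y\<in>S. x \<times> y \<noteq> 0")
  case True
  then obtain x y where "x \<in> S" "y \<in> S" "x \<times> y \<noteq> 0" by blast
  then have "S \<subseteq> span {x, y}"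
    using in_span_if_orthogonal_cross triple by blast
  then show ?thesis by (rule coplanar_insert_0_if_subset_span)
next
  case False
  show ?thesis
  proof (cases "S \<subseteq> {0}")
    case True
    then show ?thesis
      using coplanar_insert_0_if_subset_span[of S 0 0] by auto
  next
    case False
    then obtain z where z: "z \<in> S" "z \<noteq> 0" by blast
    have "x \<in> span {z, z}" if "x \<in> S" for x
    proof -
      have "collinear {0, z, x}"
        using \<open>\<not> (\<exists>x\<in>S. \<exists>y\<in>S. x \<times> y \<noteq> 0)\<close> z that cross_eq_0 by blast
      then obtain c where "x = c *\<^sub>R z"
        using z(2) collinear_lemma[of z x] by (metis scaleR_zero_left)
      then show ?thesis by (simp add: span_mul span_base)
    qed
    then show ?thesis
      by (intro coplanar_insert_0_if_subset_span) blast
  qed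
qed

lemma coplanar_if_oriented_area_zero_5:
  fixes u :: "nat \<Rightarrow> real^3"
  assumes "oriented_area_zero 5 u"
  shows "coplanar (u ` {..<5})"
proof -
  define a where "a i = u i - u 0" for i
  have indices: "{..<5::nat} = {0, 1, 2, 3, 4}"
    by auto
  have "(\<Sum>i<5. a i \<times> a (Suc i mod 5)) = 0"
    using assms sum_cross_translate[of u "u 0" 5] by (simp add: oriented_area_zero_def a_def)
  moreover have "a 0 = 0"
    by (simp add: a_def)
  ultimately have area: "a 1 \<times> a 2 + a 2 \<times> a 3 + a 3 \<times> a 4 = 0"
    by (simp add: indices \<open>a 0 = 0\<close> numeral_2_eq_2 ac_simps)
  have "a i \<bullet> (a 1 \<times> a 2 + a 2 \<times> a 3 + a 3 \<times> a 4) = 0" for i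
    unfolding area by (rule inner_zero_right)
  from this[of 1] this[of 2] this[of 3] this[of 4]
  have "a 1 \<bullet> (a 2 \<times> a 3) = 0" "a 1 \<bullet> (a 2 \<times> a 4) = 0"
       "a 1 \<bullet> (a 3 \<times> a 4) = 0" "a 2 \<bullet> (a 3 \<times> a 4) = 0"
    by (simp_all add: inner_add_right dot_cross_self triple_rotate triple_eq_0_swap)
  then have "coplanar (insert 0 {a 1, a 2, a 3, a 4})"
    by (intro coplanar_insert_0_if_triple_products_eq_0)
      (auto simp: dot_cross_self triple_rotate triple_eq_0_swap)
  moreover have "(\<lambda>x. - u 0 + x) ` (u ` {..<5}) = a ` {..<5}"
    by (simp add: a_def image_image)
  moreover have "a ` {..<5} = insert 0 {a 1, a 2, a 3, a 4}"
    using \<open>a 0 = 0\<close> by (simp add: indices)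
  ultimately show ?thesis
    using coplanar_translation_eq by metis
qed

theorem theorem4p1:
  fixes A u :: "nat \<Rightarrow> real^3"
  assumes "regular_polygon 5 A"
    and "support_system 5 A u"
  shows "coplanar (u ` {..<5}) \<and> oriented_area_zero 5 u"
  using assms(2) oriented_area_zero_if_support_system coplanar_if_oriented_area_zero_5 by blast

end
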